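(* For every temporal graph with static graph $G=(V,E)$, lifetime $T_{\max}$ and every $\delta\in\mathbb N^+$, the Follow algorithm (described in the context) terminates after at most $6|E| + \lceil T_{\max}/\delta\rceil$ rounds.
   Context: A temporal graph $\mathcal G=(V,E,\lambda)$ with lifetime $T_{\max}$ consists of a finite undirected static graph $(V,E)$ and a labeling $\lambda:E\to\{1,\dots,T_{\max}\}$; edge $e$ is present only at time $\lambda(e)$. Infection model with parameter $\delta\in\mathbb N^+$: a seed $(u,t)$ makes $u$ infected at time $t$; otherwise a susceptible node $u$ becomes infected at time $t$ iff some neighbour $v$ infectious at time $t$ has $\lambda(uv)=t$ (exactly one infector recorded if several exist). A node infected at time $t$ is infectious at times $t+1,\dots,t+\delta$ and resistant afterwards. Each round, the Discoverer submits seed infections and observes an infection log (triples $(u,v,t)$: $u$ infected $v$ at time $t$). Subroutine Explore$(u,t)$: for each $t'\in\{t-\delta-1,t-1,t\}$, if no round with seed $(u,t')$ was performed, perform a round with the single seed $(u,t')$ and record it; then for each newly observed successful infection along an edge $uv$ at time $t''$, call Explore$(v,t'')$. Algorithm Follow: pick any node $v_0$; for each $i\in[0,\lceil T_{\max}/\delta\rceil]$ perform a round with single seed $(v_0,i\delta)$; for each edge $e=v_0u$ along which an infection succeeds, call Explore$(u,\lambda(e))$. *)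

theory Defs
  imports Main "HOL-Library.Library"
begin

definition temporal_graph :: "'v set \<Rightarrow> 'v set set \<Rightarrow> ('v set \<Rightarrow> nat) \<Rightarrow> nat \<Rightarrow> bool" where
  "temporal_graph V E lam Tmax \<longleftrightarrow>
     finite V \<and>
     (\<forall>e\<in>E. \<exists>a b. a \<noteq> b \<and> a \<in> V \<and> b \<in> V \<and> e = {a, b}) \<and>
     (\<forall>e\<in>E. 1 \<le> lam e \<and> lam e \<le> Tmax)"

definition infectious :: "nat \<Rightarrow> int option \<Rightarrow> int \<Rightarrow> bool" where
  "infectious \<delta> st t \<longleftrightarrow> (\<exists>s. st = Some s \<and> s + 1 \<le> t \<and> t \<le> s + int \<delta>)"

text \<open>State (infection times) after processing times t0, t0+1, ..., t0+k,
  for the single seed (u, t0).\<close>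
fun inf_state :: "'v set set \<Rightarrow> ('v set \<Rightarrow> nat) \<Rightarrow> nat \<Rightarrow> 'v \<Rightarrow> int \<Rightarrow> nat \<Rightarrow> ('v \<Rightarrow> int option)" where
  "inf_state E lam \<delta> u t0 0 = (\<lambda>w. if w = u then Some t0 else None)"
| "inf_state E lam \<delta> u t0 (Suc k) =
     (let S = inf_state E lam \<delta> u t0 k; t = t0 + int (Suc k) in
      (\<lambda>w. if S w \<noteq> None then S w
           else if (\<exists>v. {v, w} \<in> E \<and> int (lam {v, w}) = t \<and> infectious \<delta> (S v) t)
           then Some t else None))"

text \<open>Final infection times (no edge exists after time Tmax).\<close>
definition inf_time :: "'v set set \<Rightarrow> ('v set \<Rightarrow> nat) \<Rightarrow> nat \<Rightarrow> nat \<Rightarrow> 'v \<Rightarrow> int \<Rightarrow> ('v \<Rightarrow> int option)" where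
  "inf_time E lam Tmax \<delta> u t0 = inf_state E lam \<delta> u t0 (nat (int Tmax - t0))"

text \<open>A valid infection log of the round with single seed (u,t0): a set of triples
  (x, w, s) meaning x infected w at time s; every non-seed infected node has exactly one
  recorded infector, which is an infectious neighbour along an edge with label s.
  (The choice among several possible infectors is arbitrary.)\<close>
definition valid_log :: "'v set set \<Rightarrow> ('v set \<Rightarrow> nat) \<Rightarrow> nat \<Rightarrow> nat \<Rightarrow> 'v \<times> int \<Rightarrow> ('v \<times> 'v \<times> int) set \<Rightarrow> bool" where
  "valid_log E lam Tmax \<delta> seed L \<longleftrightarrow>
     (let u = fst seed; F = inf_time E lam Tmax \<delta> (fst seed) (snd seed) in
       (\<forall>x w s. (x, w, s) \<in> L \<longrightarrow>
          w \<noteq> u \<and> F w = Some s \<and> {x, w} \<in> E \<and> int (lam {x, w}) = s \<and> infectious \<delta> (F x) s) \<and>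
       (\<forall>w s. w \<noteq> u \<and> F w = Some s \<longrightarrow> (\<exists>!x. (x, w, s) \<in> L)))"

text \<open>Execution state: set of seeds (node, time) of the rounds performed so far, and the
  stack of pending Explore calls (depth-first recursion). The log of the round with seed
  (u,t) is Lg (u,t); since no seed is used twice this models an arbitrary (adversarial)
  choice of recorded infectors. One step executes the head call Explore(u,t): it performs
  the rounds with seeds (u,t') for t' in {t-delta-1, t-1, t} not performed before, and then
  calls Explore(v,t'') for each infection (u,v,t'') observed in these new rounds, in an
  arbitrary order, before returning to the remaining pending calls.\<close>

definition explore_new :: "nat \<Rightarrow> ('v \<times> int) set \<Rightarrow> 'v \<Rightarrow> int \<Rightarrow> int set" where
  "explore_new \<delta> P u t = {t'. t' \<in> {t - int \<delta> - 1, t - 1, t} \<and> (u, t') \<notin> P}"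

inductive follow_step :: "nat \<Rightarrow> ('v \<times> int \<Rightarrow> ('v \<times> 'v \<times> int) set) \<Rightarrow>
    ('v \<times> int) set \<times> ('v \<times> int) list \<Rightarrow> ('v \<times> int) set \<times> ('v \<times> int) list \<Rightarrow> bool"
  for \<delta> Lg where
  "distinct cs \<Longrightarrow>
   set cs = {(v, s). \<exists>t'\<in>explore_new \<delta> P u t. (u, v, s) \<in> Lg (u, t')} \<Longrightarrow>
   follow_step \<delta> Lg (P, (u, t) # rest)
     (P \<union> {(u, t') | t'. t' \<in> explore_new \<delta> P u t}, cs @ rest)"

definition follow_init_rounds :: "nat \<Rightarrow> nat \<Rightarrow> 'v \<Rightarrow> ('v \<times> int) set" where
  "follow_init_rounds Tmax \<delta> v0 =
     {(v0, int i * int \<delta>) | i. i < nat \<lceil>real Tmax / real \<delta>\<rceil>}"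

definition follow_init_calls :: "nat \<Rightarrow> nat \<Rightarrow> ('v \<times> int \<Rightarrow> ('v \<times> 'v \<times> int) set) \<Rightarrow> 'v \<Rightarrow> ('v \<times> int) set" where
  "follow_init_calls Tmax \<delta> Lg v0 =
     {(w, s). \<exists>r\<in>follow_init_rounds Tmax \<delta> v0. (v0, w, s) \<in> Lg r}"

end

theory Submission
  imports Defs
begin

(* Every Explore call (u, t) is triggered by a logged infection along an edge e with u \<in> e and
   t = \<lambda>(e), so calls range over the at most 2|E| pairs (u, \<lambda>(e)) with u \<in> e.  Each call
   performs only rounds (u, t') with t' \<in> {t - \<delta> - 1, t - 1, t}; together with the
   \<lceil>Tmax/\<delta>\<rceil> initial rounds this bounds the rounds by 6|E| + \<lceil>Tmax/\<delta>\<rceil>.  Since a round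
   is never repeated, a call either performs a new round or pushes no further calls, so
   (rounds still available, stack length) decreases lexicographically and Follow terminates. *)

fun explore_rounds :: "nat \<Rightarrow> 'v \<times> int \<Rightarrow> ('v \<times> int) set" where
  "explore_rounds \<delta> (u, t) = {(u, t - int \<delta> - 1), (u, t - 1), (u, t)}"

definition edge_contacts :: "'v set set \<Rightarrow> ('v set \<Rightarrow> nat) \<Rightarrow> ('v \<times> int) set" where
  "edge_contacts E lam = (\<Union>e\<in>E. (\<lambda>w. (w, int (lam e))) ` e)"

lemma card_explore_rounds_le: "card (explore_rounds \<delta> c) \<le> 3"
  by (cases c) (simp add: card_insert_le_m1)

lemma finite_explore_rounds: "finite (explore_rounds \<delta> c)"
  by (cases c) simp

lemma card_explore_rounds_union_le:
  assumes "finite P0" and "finite C"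
  shows "finite (P0 \<union> (\<Union>c\<in>C. explore_rounds \<delta> c))"
    and "card (P0 \<union> (\<Union>c\<in>C. explore_rounds \<delta> c)) \<le> card P0 + 3 * card C"
proof -
  show "finite (P0 \<union> (\<Union>c\<in>C. explore_rounds \<delta> c))"
    using assms finite_explore_rounds by blast
  have "card (P0 \<union> (\<Union>c\<in>C. explore_rounds \<delta> c)) \<le> card P0 + card (\<Union>c\<in>C. explore_rounds \<delta> c)"
    by (rule card_Un_le)
  also have "card (\<Union>c\<in>C. explore_rounds \<delta> c) \<le> (\<Sum>c\<in>C. card (explore_rounds \<delta> c))"
    by (rule card_UN_le[OF assms(2)])
  also have "\<dots> \<le> (\<Sum>c\<in>C. 3)"
    by (rule sum_mono) (rule card_explore_rounds_le)
  finally show "card (P0 \<union> (\<Union>c\<in>C. explore_rounds \<delta> c)) \<le> card P0 + 3 * card C"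
    by simp
qed

lemma temporal_graph_edge_card:
  assumes "temporal_graph V E lam Tmax" "e \<in> E"
  shows "card e = 2"
  using assms unfolding temporal_graph_def by fastforce

lemma temporal_graph_finite_edges:
  assumes "temporal_graph V E lam Tmax"
  shows "finite E"
proof -
  have "E \<subseteq> Pow V"
    using assms unfolding temporal_graph_def by fastforce
  then show ?thesis
    using assms unfolding temporal_graph_def by (meson finite_Pow_iff finite_subset)
qed

lemma edge_contacts_finite_card:
  assumes "finite E" and "\<And>e. e \<in> E \<Longrightarrow> card e = 2"
  shows "finite (edge_contacts E lam)" and "card (edge_contacts E lam) \<le> 2 * card E"
proof -
  have fin: "finite e" if "e \<in> E" for e
    by (rule card_ge_0_finite) (simp add: assms(2) that)
  show "finite (edge_contacts E lam)"
    unfolding edge_contacts_def using assms(1) fin by blast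
  have "card (edge_contacts E lam) \<le> (\<Sum>e\<in>E. card ((\<lambda>w. (w, int (lam e))) ` e))"
    unfolding edge_contacts_def by (rule card_UN_le[OF assms(1)])
  also have "\<dots> \<le> (\<Sum>e\<in>E. 2)"
    by (rule sum_mono) (metis assms(2) card_image_le fin)
  finally show "card (edge_contacts E lam) \<le> 2 * card E"
    by simp
qed

lemma valid_log_entry_edge_contact:
  assumes "valid_log E lam Tmax \<delta> seed L" and "(x, w, s) \<in> L"
  shows "(w, s) \<in> edge_contacts E lam"
proof -
  have "{x, w} \<in> E" and "int (lam {x, w}) = s"
    using assms unfolding valid_log_def Let_def by blast+
  then show ?thesis
    unfolding edge_contacts_def by blast
qed

lemma finite_card_follow_init_rounds:
  "finite (follow_init_rounds Tmax \<delta> v0)"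
  "card (follow_init_rounds Tmax \<delta> v0) \<le> nat \<lceil>real Tmax / real \<delta>\<rceil>"
proof -
  have "follow_init_rounds Tmax \<delta> v0 =
      (\<lambda>i. (v0, int i * int \<delta>)) ` {..<nat \<lceil>real Tmax / real \<delta>\<rceil>}"
    unfolding follow_init_rounds_def by auto
  then show "finite (follow_init_rounds Tmax \<delta> v0)"
    and "card (follow_init_rounds Tmax \<delta> v0) \<le> nat \<lceil>real Tmax / real \<delta>\<rceil>"
    by (simp, metis card_image_le card_lessThan finite_lessThan)
qed

lemma no_infinite_run_if_measure_decreases:
  fixes mu :: "'s \<Rightarrow> nat"
  assumes "Inv s0" and "\<And>s s'. Inv s \<Longrightarrow> R s s' \<Longrightarrow> Inv s' \<and> mu s' < mu s"
  shows "\<nexists>f. f 0 = s0 \<and> (\<forall>n. R (f n) (f (Suc n)))"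
proof
  assume "\<exists>f. f 0 = s0 \<and> (\<forall>n. R (f n) (f (Suc n)))"
  then obtain f where f0: "f 0 = s0" and run: "\<And>n. R (f n) (f (Suc n))"
    by blast
  have inv: "Inv (f n)" for n
    by (induction n) (use f0 assms run in auto)
  have "wf {(s', s). Inv s \<and> R s s'}"
    by (rule wf_subset[OF wf_measure[of mu]]) (auto dest: assms(2))
  moreover have "(f (Suc n), f n) \<in> {(s', s). Inv s \<and> R s s'}" for n
    using inv run by simp
  ultimately show False
    using wf_no_infinite_down_chainE by blast
qed

context
  fixes Lg :: "'v \<times> int \<Rightarrow> ('v \<times> 'v \<times> int) set" and C :: "('v \<times> int) set"
  assumes logged_calls_in: "\<And>r x w s. (x, w, s) \<in> Lg r \<Longrightarrow> (w, s) \<in> C"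
begin

lemma follow_step_exists:
  assumes "finite C" and "snd st \<noteq> []"
  shows "\<exists>st'. follow_step \<delta> Lg st st'"
proof -
  obtain P u t rest where st: "st = (P, (u, t) # rest)"
    using assms(2) by (metis list.exhaust prod.collapse)
  let ?calls = "{(v, s). \<exists>t'\<in>explore_new \<delta> P u t. (u, v, s) \<in> Lg (u, t')}"
  have "?calls \<subseteq> C"
    using logged_calls_in by auto
  then have "finite ?calls"
    using assms(1) by (rule finite_subset)
  then obtain cs where "distinct cs" "set cs = ?calls"
    by (meson finite_distinct_list)
  then have "follow_step \<delta> Lg st (P \<union> {(u, t') | t'. t' \<in> explore_new \<delta> P u t}, cs @ rest)"
    unfolding st by (rule follow_step.intros)
  then show ?thesis ..
qed

lemma follow_step_preserves_bounds:
  assumes step: "follow_step \<delta> Lg st st'"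
    and bounds: "fst st \<subseteq> P0 \<union> (\<Union>c\<in>C. explore_rounds \<delta> c) \<and> set (snd st) \<subseteq> C"
  shows "fst st' \<subseteq> P0 \<union> (\<Union>c\<in>C. explore_rounds \<delta> c) \<and> set (snd st') \<subseteq> C"
  using step
proof cases
  case (1 cs P u t rest)
  have "(u, t) \<in> C"
    using bounds 1 by simp
  then have "explore_rounds \<delta> (u, t) \<subseteq> (\<Union>c\<in>C. explore_rounds \<delta> c)"
    by blast
  moreover have "{(u, t') | t'. t' \<in> explore_new \<delta> P u t} \<subseteq> explore_rounds \<delta> (u, t)"
    unfolding explore_new_def by auto
  ultimately have "fst st' \<subseteq> P0 \<union> (\<Union>c\<in>C. explore_rounds \<delta> c)"
    using bounds 1 by (simp add: Un_mono le_supI2 subset_trans)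
  moreover have "set cs \<subseteq> C"
    using 1 logged_calls_in by auto
  ultimately show ?thesis
    using bounds 1 by simp
qed

lemma follow_reachable_bounds:
  assumes "set cs0 \<subseteq> C" and "(follow_step \<delta> Lg)\<^sup>*\<^sup>* (P0, cs0) st"
  shows "fst st \<subseteq> P0 \<union> (\<Union>c\<in>C. explore_rounds \<delta> c) \<and> set (snd st) \<subseteq> C"
  using assms(2)
proof (induction rule: rtranclp_induct)
  case base
  then show ?case
    using assms(1) by auto
next
  case (step st st')
  show ?case
    by (rule follow_step_preserves_bounds[OF step.hyps(2) step.IH])
qed

lemma follow_step_measure_decreases:
  assumes "finite C" and "finite B" and step: "follow_step \<delta> Lg st st'" and "fst st' \<subseteq> B"
  shows "(card B - card (fst st')) * (card C + 1) + length (snd st')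
       < (card B - card (fst st)) * (card C + 1) + length (snd st)"
  using step
proof cases
  case (1 cs P u t rest)
  show ?thesis
  proof (cases "explore_new \<delta> P u t = {}")
    case True
    then show ?thesis
      using 1 by simp
  next
    case False
    then have "P \<subset> fst st'"
      using 1 unfolding explore_new_def by auto
    then have "card P < card (fst st')" and "card (fst st') \<le> card B"
      using assms(2,4) by (auto intro: psubset_card_mono card_mono finite_subset)
    \<comment> \<open>the weight card C + 1 lets one new round outweigh the at most card C pushed calls\<close>
    then have "(card B - card (fst st') + 1) * (card C + 1) \<le> (card B - card P) * (card C + 1)"
      by (intro mult_right_mono) auto
    moreover have "length cs \<le> card C"
    proof -
      have "set cs \<subseteq> C"
        using 1 logged_calls_in by auto
      then show ?thesis
        using 1 assms(1) by (metis card_mono distinct_card)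
    qed
    ultimately show ?thesis
      using 1 by (simp add: algebra_simps)
  qed
qed

lemma follow_terminates:
  assumes "finite C" and "finite P0" and "set cs0 \<subseteq> C"
  shows "\<nexists>f. f 0 = (P0, cs0) \<and> (\<forall>n. follow_step \<delta> Lg (f n) (f (Suc n)))"
proof -
  let ?B = "P0 \<union> (\<Union>c\<in>C. explore_rounds \<delta> c)"
  let ?bounded = "\<lambda>st. fst st \<subseteq> ?B \<and> set (snd st) \<subseteq> C"
  let ?mu = "\<lambda>st. (card ?B - card (fst st)) * (card C + 1) + length (snd st)"
  have "finite ?B"
    using assms(1,2) finite_explore_rounds by blast
  have "?bounded st' \<and> ?mu st' < ?mu st" if "?bounded st" "follow_step \<delta> Lg st st'" for st st'
  proof
    show "?bounded st'"
      by (rule follow_step_preserves_bounds[OF that(2,1)])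
    then have "fst st' \<subseteq> ?B"
      by simp
    then show "?mu st' < ?mu st"
      using follow_step_measure_decreases[OF assms(1) \<open>finite ?B\<close> that(2)] by simp
  qed
  moreover have "?bounded (P0, cs0)"
    using assms(3) by simp
  ultimately show ?thesis
    using no_infinite_run_if_measure_decreases[where Inv = ?bounded and mu = ?mu] by blast
qed

end

theorem mainTheorem7:
  fixes V :: "'v set" and E :: "'v set set" and lam :: "'v set \<Rightarrow> nat"
    and Tmax \<delta> :: nat and v0 :: 'v
    and Lg :: "'v \<times> int \<Rightarrow> ('v \<times> 'v \<times> int) set"
    and cs0 :: "('v \<times> int) list"
  assumes "temporal_graph V E lam Tmax"
    and "\<delta> > 0"
    and "v0 \<in> V"
    and "\<And>seed. valid_log E lam Tmax \<delta> seed (Lg seed)"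
    and "distinct cs0"
    and "set cs0 = follow_init_calls Tmax \<delta> Lg v0"
  shows "(\<nexists>f. f 0 = (follow_init_rounds Tmax \<delta> v0, cs0) \<and>
              (\<forall>n. follow_step \<delta> Lg (f n) (f (Suc n))))
    \<and> (\<forall>st. (follow_step \<delta> Lg)\<^sup>*\<^sup>* (follow_init_rounds Tmax \<delta> v0, cs0) st \<longrightarrow>
           snd st \<noteq> [] \<longrightarrow> (\<exists>st'. follow_step \<delta> Lg st st'))
    \<and> (\<forall>st. (follow_step \<delta> Lg)\<^sup>*\<^sup>* (follow_init_rounds Tmax \<delta> v0, cs0) st \<longrightarrow>
           finite (fst st) \<and>
           card (fst st) \<le> 6 * card E + nat \<lceil>real Tmax / real \<delta>\<rceil>)"
proof -
  let ?C = "edge_contacts E lam" and ?P0 = "follow_init_rounds Tmax \<delta> v0"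
  let ?B = "?P0 \<union> (\<Union>c\<in>?C. explore_rounds \<delta> c)"
  have logs: "(w, s) \<in> ?C" if "(x, w, s) \<in> Lg r" for r x w s
    using valid_log_entry_edge_contact[OF assms(4) that] .
  note C = edge_contacts_finite_card[OF temporal_graph_finite_edges[OF assms(1)]
      temporal_graph_edge_card[OF assms(1)], of lam]
  note B = card_explore_rounds_union_le[OF finite_card_follow_init_rounds(1) C(1), of Tmax \<delta> v0 \<delta>]
  have cs0: "set cs0 \<subseteq> ?C"
    using assms(6) unfolding follow_init_calls_def by (auto intro: logs)
  have "card ?B \<le> 6 * card E + nat \<lceil>real Tmax / real \<delta>\<rceil>"
    using B(2) C(2) finite_card_follow_init_rounds(2)[of Tmax \<delta> v0] by linarith
  moreover have "finite (fst st) \<and> card (fst st) \<le> card ?B"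
    if "(follow_step \<delta> Lg)\<^sup>*\<^sup>* (?P0, cs0) st" for st
    using follow_reachable_bounds[OF logs cs0 that] B(1) by (meson card_mono finite_subset)
  ultimately show ?thesis
    using follow_terminates[OF logs C(1) finite_card_follow_init_rounds(1) cs0]
      follow_step_exists[OF logs C(1)] by (meson order_trans)
qed

end
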